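(* Let $A=(A_1,\dots,A_d)$ have a palindromic distribution $p$ on $\{0,1\}^d$ with $p(a)>0$ for all $a$. If the largest clique of the concentration graph of $p$ has size three, then $p$ is a palindromic Ising model, i.e. all log-linear interactions $\lambda_b=2^{-d}\sum_{a}(-1)^{a\cdot b}\log p(a)$ with $|b|\ge 3$ vanish.
   Context: Palindromic: $p(a)=p(\sim a)$ for all $a$, where $\sim a$ is the complement of the binary vector $a$. For $b\in\{0,1\}^d$, $|b|=\sum_v b_v$ and $a\cdot b=\sum_v a_vb_v$. The concentration graph of $p$ is the undirected graph on nodes $\{1,\dots,d\}$ in which the edge $\{i,j\}$ is missing if and only if $A_i\perp\!\!\!\perp A_j\mid (A_v)_{v\ne i,j}$ (equivalently, the two-factor log-linear interaction of $i,j$ and all higher interactions containing $i,j$ vanish). A clique is a maximal complete subset of nodes. An Ising model is a positive distribution on $\{0,1\}^d$ with no log-linear interaction of order higher than two; it is a palindromic Ising model if it is moreover palindromic (equivalently, has in addition uniform margins). *)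

theory Defs
  imports Complex_Main
begin

text \<open>A binary vector a in {0,1}^d is encoded as the set of coordinates v in {1..d}
  with a_v = 1, i.e. as a subset of {1..d}. A distribution is p :: nat set => real
  on Pow {1..d}.\<close>

definition nodes :: "nat \<Rightarrow> nat set" where
  "nodes d = {1..d}"

definition compl_vec :: "nat \<Rightarrow> nat set \<Rightarrow> nat set" where
  "compl_vec d a = nodes d - a"

definition palindromic :: "nat \<Rightarrow> (nat set \<Rightarrow> real) \<Rightarrow> bool" where
  "palindromic d p \<longleftrightarrow> (\<forall>a \<subseteq> nodes d. p a = p (compl_vec d a))"

definition set_coord :: "nat set \<Rightarrow> nat \<Rightarrow> bool \<Rightarrow> nat set" where
  "set_coord a i x = (if x then insert i a else a - {i})"

text \<open>Conditional independence of A_i and A_j given all other coordinates: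
  P(A_i=a_i,A_j=a_j,A_rest=a_rest) P(A_rest=a_rest)
   = P(A_i=a_i,A_rest=a_rest) P(A_j=a_j,A_rest=a_rest) for all a.\<close>
definition cond_indep :: "nat \<Rightarrow> (nat set \<Rightarrow> real) \<Rightarrow> nat \<Rightarrow> nat \<Rightarrow> bool" where
  "cond_indep d p i j \<longleftrightarrow>
     (\<forall>a \<subseteq> nodes d.
        p a * (\<Sum>x\<in>UNIV. \<Sum>y\<in>UNIV. p (set_coord (set_coord a i x) j y))
        = (\<Sum>y\<in>UNIV. p (set_coord a j y)) * (\<Sum>x\<in>UNIV. p (set_coord a i x)))"

definition conc_edge :: "nat \<Rightarrow> (nat set \<Rightarrow> real) \<Rightarrow> nat \<Rightarrow> nat \<Rightarrow> bool" where
  "conc_edge d p i j \<longleftrightarrow> i \<in> nodes d \<and> j \<in> nodes d \<and> i \<noteq> j \<and> \<not> cond_indep d p i j"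

definition complete_set :: "nat \<Rightarrow> (nat set \<Rightarrow> real) \<Rightarrow> nat set \<Rightarrow> bool" where
  "complete_set d p C \<longleftrightarrow> C \<subseteq> nodes d \<and> (\<forall>i\<in>C. \<forall>j\<in>C. i \<noteq> j \<longrightarrow> conc_edge d p i j)"

definition clique :: "nat \<Rightarrow> (nat set \<Rightarrow> real) \<Rightarrow> nat set \<Rightarrow> bool" where
  "clique d p C \<longleftrightarrow> complete_set d p C \<and>
     (\<forall>D. complete_set d p D \<and> C \<subseteq> D \<longrightarrow> D = C)"

definition max_clique_size :: "nat \<Rightarrow> (nat set \<Rightarrow> real) \<Rightarrow> nat" where
  "max_clique_size d p = Max (card ` {C. clique d p C})"

definition loglin :: "nat \<Rightarrow> (nat set \<Rightarrow> real) \<Rightarrow> nat set \<Rightarrow> real" where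
  "loglin d p b = (1 / 2 ^ d) * (\<Sum>a\<in>Pow (nodes d). (-1) ^ card (a \<inter> b) * ln (p a))"

end

theory Submission
  imports Defs
begin

text \<open>Odd interactions vanish for any palindromic distribution, because complementing
  a flips the sign of (-1)^(a\<cdot>b) when |b| is odd. An even b with |b| \<ge> 4 cannot be a
  complete set, since it would lie in a clique of size at least four; so b contains a
  missing edge {i,j}. Conditional independence of A_i and A_j given the rest is the
  cross-product identity p(s) p(s+i+j) = p(s+i) p(s+j), and grouping the sum defining
  \<lambda>_b into the quadruples s, s+i, s+j, s+i+j makes every group the logarithm of this
  cross-product ratio, hence zero.\<close>

lemma sum_Pow_insert:
  assumes "finite A" "x \<notin> A"
  shows "sum g (Pow (insert x A)) = sum g (Pow A) + (\<Sum>s\<in>Pow A. g (insert x s))"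
proof -
  have inj: "inj_on (insert x) (Pow A)"
    using assms(2) unfolding inj_on_def by (metis PowD insert_ident subsetD)
  have "sum g (Pow (insert x A)) = sum g (Pow A) + sum g (insert x ` Pow A)"
    unfolding Pow_insert by (rule sum.union_disjoint) (use assms in auto)
  also have "sum g (insert x ` Pow A) = (\<Sum>s\<in>Pow A. g (insert x s))"
    using sum.reindex[OF inj] by (simp add: comp_def)
  finally show ?thesis .
qed

lemma sum_Pow_insert2:
  assumes "finite A" "i \<notin> A" "j \<notin> A" "i \<noteq> j"
  shows "sum g (Pow (insert i (insert j A))) =
    (\<Sum>s\<in>Pow A. g s + g (insert j s) + g (insert i s) + g (insert i (insert j s)))"
proof -
  have "finite (insert j A)" "i \<notin> insert j A" using assms by auto
  then show ?thesis using assms by (simp add: sum_Pow_insert sum.distrib add.assoc)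
qed

lemma minus_one_power_card_insert_Int:
  assumes "finite s" "x \<in> b" "x \<notin> s"
  shows "(-1::'a::ring_1) ^ card (insert x s \<inter> b) = - ((-1) ^ card (s \<inter> b))"
proof -
  have "insert x s \<inter> b = insert x (s \<inter> b)" using assms(2) by auto
  then show ?thesis using assms by simp
qed

lemma minus_one_power_card_compl_Int:
  assumes "finite N" "a \<subseteq> N" "b \<subseteq> N" "odd (card b)"
  shows "(-1::'a::ring_1) ^ card ((N - a) \<inter> b) = - ((-1) ^ card (a \<inter> b))"
proof -
  have fin: "finite b" using assms(1,3) by (rule finite_subset[rotated])
  have "(N - a) \<inter> b = b - a \<inter> b" using assms(3) by blast
  then have "card ((N - a) \<inter> b) + card (a \<inter> b) = card b"
    using fin by (simp add: card_Diff_subset card_mono)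
  then have "even (card ((N - a) \<inter> b)) \<longleftrightarrow> odd (card (a \<inter> b))"
    using assms(4) by presburger
  then show ?thesis by (simp add: minus_one_power_iff)
qed

lemma cond_indep_imp_cross_product:
  assumes "cond_indep d p i j" "i \<noteq> j" "s \<subseteq> nodes d" "i \<notin> s" "j \<notin> s"
  shows "p s * p (insert i (insert j s)) = p (insert i s) * p (insert j s)"
proof -
  have "s - {i} = s" "s - {j} = s" "insert i s - {j} = insert i s"
    "insert j (insert i s) = insert i (insert j s)"
    using assms(2,4,5) by auto
  moreover have "p s * (\<Sum>x\<in>UNIV. \<Sum>y\<in>UNIV. p (set_coord (set_coord s i x) j y))
        = (\<Sum>y\<in>UNIV. p (set_coord s j y)) * (\<Sum>x\<in>UNIV. p (set_coord s i x))"
    using assms(1,3) unfolding cond_indep_def by blast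
  ultimately have "p s * (p (insert i (insert j s)) + p (insert i s) + (p (insert j s) + p s))
       = (p (insert j s) + p s) * (p (insert i s) + p s)"
    by (simp add: set_coord_def UNIV_bool add.commute)
  then show ?thesis by (simp add: algebra_simps)
qed

lemma loglin_eq_0_if_cond_indep:
  assumes pos: "\<forall>a \<subseteq> nodes d. p a > 0"
    and ci: "cond_indep d p i j" and "i \<noteq> j"
    and "i \<in> nodes d" "j \<in> nodes d" "i \<in> b" "j \<in> b"
  shows "loglin d p b = 0"
proof -
  define g where "g a = (-1::real) ^ card (a \<inter> b) * ln (p a)" for a
  define N where "N = nodes d - {i, j}"
  have fin: "finite N" unfolding N_def nodes_def by simp
  have nodes: "nodes d = insert i (insert j N)" using assms unfolding N_def by auto
  have "(\<Sum>s\<in>Pow N. g s + g (insert j s) + g (insert i s) + g (insert i (insert j s))) = 0"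
  proof (rule sum.neutral, rule ballI)
    fix s assume "s \<in> Pow N"
    then have s: "s \<subseteq> nodes d" "i \<notin> s" "j \<notin> s" "finite s"
      using fin by (auto simp: N_def finite_subset)
    have "ln (p s * p (insert i (insert j s))) = ln (p (insert i s) * p (insert j s))"
      using cond_indep_imp_cross_product[OF ci \<open>i \<noteq> j\<close> s(1-3)] by simp
    moreover have "p s > 0" "p (insert i s) > 0" "p (insert j s) > 0"
      "p (insert i (insert j s)) > 0"
      using pos s assms by auto
    ultimately have "ln (p s) + ln (p (insert i (insert j s)))
        = ln (p (insert i s)) + ln (p (insert j s))"
      by (simp add: ln_mult)
    moreover have "g s + g (insert j s) + g (insert i s) + g (insert i (insert j s))
        = (-1) ^ card (s \<inter> b) * ((ln (p s) + ln (p (insert i (insert j s))))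
            - (ln (p (insert i s)) + ln (p (insert j s))))"
      using s assms unfolding g_def
      by (simp add: minus_one_power_card_insert_Int algebra_simps)
    ultimately show "g s + g (insert j s) + g (insert i s) + g (insert i (insert j s)) = 0"
      by simp
  qed
  moreover have "sum g (Pow (nodes d)) =
      (\<Sum>s\<in>Pow N. g s + g (insert j s) + g (insert i s) + g (insert i (insert j s)))"
    unfolding nodes by (rule sum_Pow_insert2) (use fin assms in \<open>auto simp: N_def\<close>)
  ultimately show ?thesis unfolding loglin_def g_def by simp
qed

lemma loglin_eq_0_if_odd_card:
  assumes pal: "palindromic d p" and b: "b \<subseteq> nodes d" and odd: "odd (card b)"
  shows "loglin d p b = 0"
proof -
  define N where "N = nodes d"
  define g where "g = (\<lambda>a. (-1::real) ^ card (a \<inter> b) * ln (p a))"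
  have finN: "finite N" unfolding N_def nodes_def by simp
  have "(\<Sum>a\<in>Pow N. g a) = (\<Sum>a\<in>Pow N. g (N - a))"
    by (rule sum.reindex_bij_witness[where i="\<lambda>a. N - a" and j="\<lambda>a. N - a"])
      (auto simp: double_diff)
  also have "\<dots> = (\<Sum>a\<in>Pow N. - g a)"
  proof (rule sum.cong[OF refl])
    fix a assume a: "a \<in> Pow N"
    then have "p (N - a) = p a"
      using pal unfolding palindromic_def compl_vec_def N_def by (metis PowD)
    moreover have "(-1::real) ^ card ((N - a) \<inter> b) = - ((-1) ^ card (a \<inter> b))"
      using a finN b odd unfolding N_def by (intro minus_one_power_card_compl_Int) auto
    ultimately show "g (N - a) = - g a" unfolding g_def by simp
  qed
  finally have "sum g (Pow N) = 0" by (simp add: sum_negf)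
  then show ?thesis unfolding loglin_def g_def N_def by simp
qed

lemma complete_set_subset_clique:
  assumes "complete_set d p C"
  obtains K where "clique d p K" "C \<subseteq> K"
proof -
  let ?S = "{D. complete_set d p D \<and> C \<subseteq> D}"
  have "?S \<subseteq> Pow (nodes d)" by (auto simp: complete_set_def)
  then have "finite ?S" by (simp add: finite_subset nodes_def)
  moreover have "?S \<noteq> {}" using assms by blast
  ultimately obtain K where K: "K \<in> ?S" and max: "\<forall>D\<in>?S. K \<le> D \<longrightarrow> K = D"
    using finite_has_maximal by meson
  have "clique d p K" unfolding clique_def
  proof (intro conjI allI impI)
    show "complete_set d p K" using K by simp
    fix D assume "complete_set d p D \<and> K \<subseteq> D"
    then show "D = K" using K max by auto
  qed
  then show thesis using K that by blast
qed

lemma complete_set_card_le_max_clique_size: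
  assumes "complete_set d p C"
  shows "card C \<le> max_clique_size d p"
proof -
  have fin: "finite (nodes d)" unfolding nodes_def by simp
  obtain K where K: "clique d p K" "C \<subseteq> K"
    using complete_set_subset_clique[OF assms] .
  have "K \<subseteq> nodes d" using K(1) by (simp add: clique_def complete_set_def)
  with fin have "finite K" by (rule finite_subset[rotated])
  then have "card C \<le> card K" using K(2) by (rule card_mono)
  also have "card K \<le> max_clique_size d p" unfolding max_clique_size_def
  proof (rule Max_ge)
    have "{C. clique d p C} \<subseteq> Pow (nodes d)"
      by (auto simp: clique_def complete_set_def)
    then have "finite {C. clique d p C}"
      using fin by (meson finite_Pow_iff finite_subset)
    then show "finite (card ` {C. clique d p C})" by (rule finite_imageI)
    show "card K \<in> card ` {C. clique d p C}"
      using K(1) by (intro imageI CollectI)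
  qed
  finally show ?thesis .
qed

theorem proposition5p1:
  fixes d :: nat and p :: "nat set \<Rightarrow> real"
  assumes pos: "\<forall>a \<subseteq> nodes d. p a > 0"
    and distr: "(\<Sum>a\<in>Pow (nodes d). p a) = 1"
    and pal: "palindromic d p"
    and clq: "max_clique_size d p = 3"
  shows "\<forall>b \<subseteq> nodes d. card b \<ge> 3 \<longrightarrow> loglin d p b = 0"
proof (intro allI impI)
  fix b assume b: "b \<subseteq> nodes d" and "card b \<ge> 3"
  show "loglin d p b = 0"
  proof (cases "odd (card b)")
    case True
    then show ?thesis using loglin_eq_0_if_odd_card[OF pal b] by simp
  next
    case False
    with \<open>card b \<ge> 3\<close> have "card b > max_clique_size d p"
      using clq by presburger
    then have "\<not> complete_set d p b"
      using complete_set_card_le_max_clique_size by (meson not_le)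
    then obtain i j where "i \<in> b" "j \<in> b" "i \<noteq> j" "\<not> conc_edge d p i j"
      using b unfolding complete_set_def by blast
    then show ?thesis
      using loglin_eq_0_if_cond_indep[OF pos] b unfolding conc_edge_def by blast
  qed
qed

end
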